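(* Let $G$ be a graph on $V$ and $W\subseteq V$ reducible in $G$. Then there is an applicable combinatorial reduction strategy $(\gamma_1,\dots,\gamma_k)$ on $G$ with domain $W$ such that $\gamma_k\circ\cdots\circ\gamma_1(G)=\Gamma_W(G)$.
   Context: A graph means a finite simple graph in which loops are allowed, with adjacency matrix $A$ over $\mathbf F_2$ ($A_{vv}=1$ iff $v$ has a loop). Let $\mathcal V$ be the $\mathbf F_2$-vector space with basis $V$, $\mathcal E(x,y)=x^TAy$, $\langle W\rangle$ the span of $W$, $\langle W\rangle^{\perp\mathcal E}=\{x:\mathcal E(x,w)=0\ \forall w\in\langle W\rangle\}$. $W$ is reducible if $\langle W\rangle+\langle W\rangle^{\perp\mathcal E}=\mathcal V$; then $\mathcal E^W(x_1,x_2)=\mathcal E(x_1',x_2')$ with $x_i'\in\langle W\rangle^{\perp\mathcal E}$, $x_i-x_i'\in\langle W\rangle$, and $\Gamma_W(G)$ is the graph on $V\setminus W$ in which $v,w$ (possibly equal) are joined iff $\mathcal E^W(v,w)=1$. Combinatorial reduction rules (domain ordered first, $R$ the principal submatrix on the remaining vertices): $\mathrm{gpr}_v$ applies iff $v$ has a loop, $\begin{pmatrix}1&Q\\Q^T&R\end{pmatrix}\mapsto R-Q^TQ$; $\mathrm{gdr}_{v_1,v_2}$ applies iff $v_1,v_2$ are loopless and adjacent, $\begin{pmatrix}J&Q\\Q^T&R\end{pmatrix}\mapsto R-Q^TJQ$, $J=\begin{pmatrix}0&1\\1&0\end{pmatrix}$; $\mathrm{gnr}_v$ applies iff $v$ is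 loopless with no neighbors, $\begin{pmatrix}0&\mathbf 0\\ \mathbf 0^T&R\end{pmatrix}\mapsto R$. A combinatorial reduction strategy is a sequence $(\gamma_1,\dots,\gamma_k)$ of such rules; it is applicable to $G$ if each $\gamma_i$ applies to $\gamma_{i-1}\circ\cdots\circ\gamma_1(G)$; its domain is the set of all vertices removed. *)

theory Defs
  imports Main
begin

text \<open>A graph (loops allowed) is a pair (V, A): a finite vertex set V and an adjacency
  relation A (the adjacency matrix over F2, A v v = loop at v), symmetric and vanishing
  outside V. Vectors of the F2-space with basis V are represented by subsets of V
  (their supports); vector addition is symmetric difference.\<close>

type_synonym 'a graph = "'a set \<times> ('a \<Rightarrow> 'a \<Rightarrow> bool)"

definition is_graph :: "'a graph \<Rightarrow> bool" where
  "is_graph G \<longleftrightarrow> finite (fst G) \<and> (\<forall>u w. snd G u w = snd G w u)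
     \<and> (\<forall>u w. snd G u w \<longrightarrow> u \<in> fst G \<and> w \<in> fst G)"

definition symdiff :: "'a set \<Rightarrow> 'a set \<Rightarrow> 'a set" where
  "symdiff x y = (x - y) \<union> (y - x)"

text \<open>Bilinear form E(x,y) = x^T A y over F2 (True means 1).\<close>
definition bform :: "('a \<Rightarrow> 'a \<Rightarrow> bool) \<Rightarrow> 'a set \<Rightarrow> 'a set \<Rightarrow> bool" where
  "bform A x y = odd (card {(u, v). u \<in> x \<and> v \<in> y \<and> A u v})"

definition span_W :: "'a set \<Rightarrow> 'a set set" where
  "span_W W = {y. y \<subseteq> W}"

definition perpE :: "'a graph \<Rightarrow> 'a set \<Rightarrow> 'a set set" where
  "perpE G W = {x. x \<subseteq> fst G \<and> (\<forall>w \<in> span_W W. \<not> bform (snd G) x w)}"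

definition reducible :: "'a graph \<Rightarrow> 'a set \<Rightarrow> bool" where
  "reducible G W \<longleftrightarrow> (\<forall>x. x \<subseteq> fst G \<longrightarrow>
      (\<exists>y z. y \<in> span_W W \<and> z \<in> perpE G W \<and> x = symdiff y z))"

definition perp_part :: "'a graph \<Rightarrow> 'a set \<Rightarrow> 'a set \<Rightarrow> 'a set" where
  "perp_part G W x = (SOME x'. x' \<in> perpE G W \<and> symdiff x x' \<in> span_W W)"

definition bformW :: "'a graph \<Rightarrow> 'a set \<Rightarrow> 'a set \<Rightarrow> 'a set \<Rightarrow> bool" where
  "bformW G W x1 x2 = bform (snd G) (perp_part G W x1) (perp_part G W x2)"

definition Gamma :: "'a set \<Rightarrow> 'a graph \<Rightarrow> 'a graph" where
  "Gamma W G = (fst G - W,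
     \<lambda>u w. u \<in> fst G - W \<and> w \<in> fst G - W \<and> bformW G W {u} {w})"

datatype 'a rule = Gpr 'a | Gdr 'a 'a | Gnr 'a

fun rule_dom :: "'a rule \<Rightarrow> 'a set" where
  "rule_dom (Gpr v) = {v}"
| "rule_dom (Gdr v1 v2) = {v1, v2}"
| "rule_dom (Gnr v) = {v}"

fun applies :: "'a rule \<Rightarrow> 'a graph \<Rightarrow> bool" where
  "applies (Gpr v) G = (v \<in> fst G \<and> snd G v v)"
| "applies (Gdr v1 v2) G = (v1 \<in> fst G \<and> v2 \<in> fst G \<and> \<not> snd G v1 v1 \<and> \<not> snd G v2 v2
      \<and> snd G v1 v2)"
| "applies (Gnr v) G = (v \<in> fst G \<and> \<not> snd G v v \<and> (\<forall>u \<in> fst G. \<not> snd G v u))"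

text \<open>Over F2: gpr gives R - Q^T Q, gdr gives R - Q^T J Q, gnr gives R.\<close>
fun apply_rule :: "'a rule \<Rightarrow> 'a graph \<Rightarrow> 'a graph" where
  "apply_rule (Gpr v) G = (fst G - {v},
     \<lambda>u w. u \<in> fst G - {v} \<and> w \<in> fst G - {v} \<and>
       (snd G u w \<noteq> (snd G v u \<and> snd G v w)))"
| "apply_rule (Gdr v1 v2) G = (fst G - {v1, v2},
     \<lambda>u w. u \<in> fst G - {v1, v2} \<and> w \<in> fst G - {v1, v2} \<and>
       (snd G u w \<noteq> ((snd G v1 u \<and> snd G v2 w) \<noteq> (snd G v2 u \<and> snd G v1 w))))"
| "apply_rule (Gnr v) G = (fst G - {v},
     \<lambda>u w. u \<in> fst G - {v} \<and> w \<in> fst G - {v} \<and> snd G u w)"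

fun applicable :: "'a rule list \<Rightarrow> 'a graph \<Rightarrow> bool" where
  "applicable [] G = True"
| "applicable (r # rs) G = (applies r G \<and> applicable rs (apply_rule r G))"

fun run_strategy :: "'a rule list \<Rightarrow> 'a graph \<Rightarrow> 'a graph" where
  "run_strategy [] G = G"
| "run_strategy (r # rs) G = run_strategy rs (apply_rule r G)"

definition strategy_dom :: "'a rule list \<Rightarrow> 'a set" where
  "strategy_dom rs = (\<Union>r \<in> set rs. rule_dom r)"

end

theory Submission
  imports Defs
begin

(* Vectors of the F2-space on V are subsets of V, the form E(x,y) is the
   parity of the number of edges between x and y, and it is bilinear with respect to
   symmetric difference.  Call a graph G' on V - D "perp-compatible" with (G, W, D) if
   for every x in the E-orthogonal complement of span W, deleting D from x does not
   change the value of E on vectors supported in V - D.  Then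
   (1) perp-compatibility transfers reducibility of W in G to reducibility of W - D in
       G' and gives Gamma_{W-D}(G') = Gamma_W(G), because edges of Gamma are computed
       from any orthogonal representative of a vertex (lemma gamma_edge);
   (2) whenever W is nonempty, one of the rules gpr, gdr, gnr applies inside W and the
       graph it produces is perp-compatible: a loop in W allows gpr, an edge inside a
       loopless W allows gdr, and otherwise reducibility forces some vertex of W to be
       isolated, allowing gnr.
   Induction on |W| then produces the strategy; the empty strategy handles W = {}
   since Gamma_{} G = G. *)

section \<open>Parity of edge counts: the bilinear form over F2\<close>

lemma odd_card_symdiff:
  assumes "finite S" "finite T"
  shows "odd (card (symdiff S T)) = (odd (card S) \<noteq> odd (card T))"
proof -
  have split: "symdiff S T = (S \<union> T) - (S \<inter> T)" unfolding symdiff_def by auto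
  have "card (S \<union> T) + card (S \<inter> T) = card S + card T"
    using card_Un_Int[OF assms] by simp
  moreover have "card ((S \<union> T) - (S \<inter> T)) = card (S \<union> T) - card (S \<inter> T)"
    by (rule card_Diff_subset) (use assms in auto)
  moreover have "card (S \<inter> T) \<le> card (S \<union> T)" by (rule card_mono) (use assms in auto)
  ultimately show ?thesis unfolding split by presburger
qed

lemma finite_edge_pairs:
  "finite x \<Longrightarrow> finite y \<Longrightarrow> finite {(u, v). u \<in> x \<and> v \<in> y \<and> A u v}"
  by (rule finite_subset[of _ "x \<times> y"]) auto

lemma bform_symdiff_left:
  assumes "finite x" "finite x'" "finite y"
  shows "bform A (symdiff x x') y = (bform A x y \<noteq> bform A x' y)"
proof -
  have "{(u, v). u \<in> symdiff x x' \<and> v \<in> y \<and> A u v} =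
     symdiff {(u, v). u \<in> x \<and> v \<in> y \<and> A u v} {(u, v). u \<in> x' \<and> v \<in> y \<and> A u v}"
    unfolding symdiff_def by auto
  then show ?thesis unfolding bform_def
    by (simp add: odd_card_symdiff finite_edge_pairs assms)
qed

lemma bform_symdiff_right:
  assumes "finite x" "finite y" "finite y'"
  shows "bform A x (symdiff y y') = (bform A x y \<noteq> bform A x y')"
proof -
  have "{(u, v). u \<in> x \<and> v \<in> symdiff y y' \<and> A u v} =
     symdiff {(u, v). u \<in> x \<and> v \<in> y \<and> A u v} {(u, v). u \<in> x \<and> v \<in> y' \<and> A u v}"
    unfolding symdiff_def by auto
  then show ?thesis unfolding bform_def
    by (simp add: odd_card_symdiff finite_edge_pairs assms)
qed

lemma bform_remove:
  assumes "finite x" "finite z"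
  shows "bform A x z = (bform A (x - {v}) z \<noteq> (v \<in> x \<and> bform A {v} z))"
proof (cases "v \<in> x")
  case True
  then have "x = symdiff (x - {v}) {v}" unfolding symdiff_def by auto
  then have "bform A x z = (bform A (x - {v}) z \<noteq> bform A {v} z)"
    using bform_symdiff_left[of "x - {v}" "{v}" z A] assms by simp
  then show ?thesis using True by simp
qed simp

lemma bform_add:
  assumes "finite x" "finite y"
  shows "bform (\<lambda>u w. A u w \<noteq> B u w) x y = (bform A x y \<noteq> bform B x y)"
proof -
  have "{(u, v). u \<in> x \<and> v \<in> y \<and> (A u v \<noteq> B u v)} =
     symdiff {(u, v). u \<in> x \<and> v \<in> y \<and> A u v} {(u, v). u \<in> x \<and> v \<in> y \<and> B u v}"
    unfolding symdiff_def by auto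
  then show ?thesis unfolding bform_def
    by (simp add: odd_card_symdiff finite_edge_pairs assms)
qed

lemma bform_sym:
  assumes "\<And>u w. A u w = A w u"
  shows "bform A x y = bform A y x"
proof -
  have "{(u, v). u \<in> y \<and> v \<in> x \<and> A u v} = prod.swap ` {(u, v). u \<in> x \<and> v \<in> y \<and> A u v}"
    using assms by auto
  then show ?thesis unfolding bform_def by (simp add: card_image)
qed

lemma bform_single: "bform A {u} {w} = A u w"
proof -
  have "{(a, b). a \<in> {u} \<and> b \<in> {w} \<and> A a b} = (if A u w then {(u, w)} else {})" by auto
  then show ?thesis unfolding bform_def by simp
qed

lemma bform_single_right: "bform A x {v} = odd (card {u \<in> x. A u v})"
proof -
  have "{(a, b). a \<in> x \<and> b \<in> {v} \<and> A a b} = (\<lambda>u. (u, v)) ` {u \<in> x. A u v}" by auto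
  moreover have "inj_on (\<lambda>u. (u, v)) {u \<in> x. A u v}" by (auto simp: inj_on_def)
  ultimately show ?thesis unfolding bform_def by (simp add: card_image)
qed

lemma bform_single_left: "bform A {v} y = odd (card {w \<in> y. A v w})"
proof -
  have "{(a, b). a \<in> {v} \<and> b \<in> y \<and> A a b} = (\<lambda>w. (v, w)) ` {w \<in> y. A v w}" by auto
  moreover have "inj_on (\<lambda>w. (v, w)) {w \<in> y. A v w}" by (auto simp: inj_on_def)
  ultimately show ?thesis unfolding bform_def by (simp add: card_image)
qed

lemma bform_restrict:
  assumes "x \<subseteq> S" "y \<subseteq> S"
  shows "bform (\<lambda>u w. u \<in> S \<and> w \<in> S \<and> C u w) x y = bform C x y"
proof -
  have "{(u, v). u \<in> x \<and> v \<in> y \<and> u \<in> S \<and> v \<in> S \<and> C u v} = {(u, v). u \<in> x \<and> v \<in> y \<and> C u v}"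
    using assms by auto
  then show ?thesis unfolding bform_def by simp
qed

text \<open>Rank-one matrices Q_a^T Q_b (row of a times row of b) factor the form:
  x^T (Q_a^T Q_b) y = E(x, a) E(b, y).  These are the correction terms of gpr and gdr.\<close>

lemma bform_rank_one:
  assumes sym: "\<And>u w. A u w = A w u" and "finite x" "finite y"
  shows "bform (\<lambda>u w. A a u \<and> A b w) x y = (bform A x {a} \<and> bform A {b} y)"
proof -
  have "{(u, v). u \<in> x \<and> v \<in> y \<and> A a u \<and> A b v} = {u \<in> x. A u a} \<times> {w \<in> y. A b w}"
    using sym by auto
  then show ?thesis
    unfolding bform_single_right bform_single_left unfolding bform_def
    by (simp add: card_cartesian_product)
qed

section \<open>Graphs and orthogonal complements\<close>

lemma graphD:
  assumes "is_graph G"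
  shows "finite (fst G)" "\<And>u w. snd G u w = snd G w u"
    "\<And>u w. snd G u w \<Longrightarrow> u \<in> fst G" "\<And>u w. snd G u w \<Longrightarrow> w \<in> fst G"
    "\<And>x. x \<subseteq> fst G \<Longrightarrow> finite x"
  using assms finite_subset unfolding is_graph_def by auto

lemma perpE_orth:
  assumes "x \<in> perpE G W" "y \<subseteq> W"
  shows "\<not> bform (snd G) x y"
  using assms unfolding perpE_def span_W_def by auto

lemma reducible_decomp:
  assumes "reducible G W" "x \<subseteq> fst G"
  obtains z where "z \<in> perpE G W" "symdiff x z \<subseteq> W"
proof -
  obtain y z where "y \<in> span_W W" "z \<in> perpE G W" "x = symdiff y z"
    using assms unfolding reducible_def by blast
  then show ?thesis using that[of z] unfolding span_W_def symdiff_def by auto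
qed

lemma perp_part_spec:
  assumes "reducible G W" "x \<subseteq> fst G"
  shows "perp_part G W x \<in> perpE G W" "symdiff x (perp_part G W x) \<subseteq> W"
proof -
  obtain z where "z \<in> perpE G W" "symdiff x z \<subseteq> W"
    using reducible_decomp[OF assms] .
  then have "\<exists>z. z \<in> perpE G W \<and> symdiff x z \<in> span_W W" by (auto simp: span_W_def)
  then have "perp_part G W x \<in> perpE G W \<and> symdiff x (perp_part G W x) \<in> span_W W"
    unfolding perp_part_def by (rule someI_ex)
  then show "perp_part G W x \<in> perpE G W" "symdiff x (perp_part G W x) \<subseteq> W"
    by (auto simp: span_W_def)
qed

lemma bform_perp_congr:
  assumes g: "is_graph G" and x: "x \<in> perpE G W"
    and y: "y \<subseteq> fst G" "y' \<subseteq> fst G" and diff: "symdiff y y' \<subseteq> W"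
  shows "bform (snd G) x y = bform (snd G) x y'"
proof -
  have fin: "finite x" "finite y" "finite (symdiff y y')"
    using x y graphD(5)[OF g] by (auto simp: perpE_def symdiff_def)
  have "y' = symdiff y (symdiff y y')" unfolding symdiff_def by auto
  then have "bform (snd G) x y' = (bform (snd G) x y \<noteq> bform (snd G) x (symdiff y y'))"
    using bform_symdiff_right[OF fin] by simp
  then show ?thesis using perpE_orth[OF x diff] by simp
qed

text \<open>An edge u--w of Gamma_W(G) can be read off from any orthogonal representative x' of u;
  the arbitrary choice made by perp_part is therefore irrelevant.\<close>

lemma gamma_edge:
  assumes g: "is_graph G" and red: "reducible G W"
    and u: "u \<in> fst G" and w: "w \<in> fst G"
    and x': "x' \<in> perpE G W" and xu: "symdiff x' {u} \<subseteq> W"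
  shows "bformW G W {u} {w} = bform (snd G) x' {w}"
proof -
  let ?A = "snd G"
  define p where "p = perp_part G W {u}"
  define q where "q = perp_part G W {w}"
  have p: "p \<in> perpE G W" "symdiff {u} p \<subseteq> W"
    using perp_part_spec[OF red] u unfolding p_def by auto
  have q: "q \<in> perpE G W" "symdiff {w} q \<subseteq> W"
    using perp_part_spec[OF red] w unfolding q_def by auto
  have V: "p \<subseteq> fst G" "q \<subseteq> fst G" "x' \<subseteq> fst G"
    using p q x' by (auto simp: perpE_def)
  have "symdiff p x' \<subseteq> W" using p(2) xu unfolding symdiff_def by auto
  have "bform ?A p q = bform ?A q p" by (rule bform_sym) (use graphD(2)[OF g] in auto)
  also have "\<dots> = bform ?A q x'"
    by (rule bform_perp_congr[OF g q(1) V(1,3)]) fact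
  also have "\<dots> = bform ?A x' q" by (rule bform_sym) (use graphD(2)[OF g] in auto)
  also have "\<dots> = bform ?A x' {w}"
    by (rule bform_perp_congr[OF g x' V(2)]) (use w q(2) in \<open>auto simp: symdiff_def\<close>)
  finally show ?thesis unfolding bformW_def p_def q_def .
qed

section \<open>Perp-compatible reductions\<close>

definition perp_compatible :: "'a graph \<Rightarrow> 'a set \<Rightarrow> 'a set \<Rightarrow> 'a graph \<Rightarrow> bool" where
  "perp_compatible G W D G' \<longleftrightarrow> fst G' = fst G - D \<and>
     (\<forall>x \<in> perpE G W. \<forall>y. y \<subseteq> fst G - D \<longrightarrow> bform (snd G') (x - D) y = bform (snd G) x y)"

lemma perp_compatible_reduction:
  assumes g: "is_graph G" and g': "is_graph G'" and WV: "W \<subseteq> fst G"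
    and red: "reducible G W" and D: "D \<subseteq> W" and comp: "perp_compatible G W D G'"
  shows "reducible G' (W - D)" "Gamma (W - D) G' = Gamma W G"
proof -
  have V': "fst G' = fst G - D"
    and H: "\<And>x y. x \<in> perpE G W \<Longrightarrow> y \<subseteq> fst G - D \<Longrightarrow> bform (snd G') (x - D) y = bform (snd G) x y"
    using comp unfolding perp_compatible_def by auto
  have lift: "z - D \<in> perpE G' (W - D)" if z: "z \<in> perpE G W" for z
  proof -
    have "\<not> bform (snd G') (z - D) w" if w: "w \<subseteq> W - D" for w
    proof -
      have "w \<subseteq> fst G - D" using w WV by auto
      then have "bform (snd G') (z - D) w = bform (snd G) z w" by (rule H[OF z])
      then show ?thesis using perpE_orth[OF z] w by auto
    qed
    then show ?thesis using z V' unfolding perpE_def span_W_def by auto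
  qed
  show red': "reducible G' (W - D)"
    unfolding reducible_def
  proof (intro allI impI)
    fix x assume x: "x \<subseteq> fst G'"
    then have "x \<subseteq> fst G" using V' by auto
    then obtain z where z: "z \<in> perpE G W" "symdiff x z \<subseteq> W"
      by (rule reducible_decomp[OF red])
    have "symdiff x (z - D) \<in> span_W (W - D)"
      using z x V' unfolding span_W_def symdiff_def by auto
    moreover have "x = symdiff (symdiff x (z - D)) (z - D)" unfolding symdiff_def by auto
    ultimately show "\<exists>y z. y \<in> span_W (W - D) \<and> z \<in> perpE G' (W - D) \<and> x = symdiff y z"
      using lift[OF z(1)] by blast
  qed
  have VW: "fst G' - (W - D) = fst G - W" using V' D by auto
  have same_edge: "bformW G' (W - D) {u} {w} = bformW G W {u} {w}"
    if u: "u \<in> fst G - W" and w: "w \<in> fst G - W" for u w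
  proof -
    obtain z where z: "z \<in> perpE G W" "symdiff {u} z \<subseteq> W"
      using reducible_decomp[OF red, of "{u}"] u by auto
    have zu: "symdiff z {u} \<subseteq> W" "symdiff (z - D) {u} \<subseteq> W - D"
      using z(2) u D unfolding symdiff_def by auto
    have "u \<in> fst G'" "w \<in> fst G'" using u w D V' by auto
    then have "bformW G' (W - D) {u} {w} = bform (snd G') (z - D) {w}"
      by (intro gamma_edge[OF g' red' _ _ lift[OF z(1)] zu(2)])
    also have "\<dots> = bform (snd G) z {w}" using H[OF z(1)] w D by auto
    also have "\<dots> = bformW G W {u} {w}"
      using u w by (intro gamma_edge[OF g red _ _ z(1) zu(1), symmetric]) auto
    finally show ?thesis .
  qed
  have "(u \<in> fst G - W \<and> w \<in> fst G - W \<and> bformW G' (W - D) {u} {w})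
      = (u \<in> fst G - W \<and> w \<in> fst G - W \<and> bformW G W {u} {w})" for u w
    using same_edge by blast
  then show "Gamma (W - D) G' = Gamma W G"
    unfolding Gamma_def VW by simp
qed

lemma fst_apply_rule: "fst (apply_rule r G) = fst G - rule_dom r"
  by (cases r) auto

lemma is_graph_apply_rule:
  assumes "is_graph G" shows "is_graph (apply_rule r G)"
  using graphD(1,2)[OF assms] by (cases r) (auto simp: is_graph_def)

text \<open>gpr at a looped v: A' = A + Q^T Q with Q the row of v, and E(x, v) = 0 for orthogonal x.\<close>

lemma gpr_compatible:
  assumes g: "is_graph G" and v: "v \<in> W" and loop: "snd G v v"
  shows "perp_compatible G W {v} (apply_rule (Gpr v) G)"
  unfolding perp_compatible_def
proof (intro conjI ballI allI impI)
  show "fst (apply_rule (Gpr v) G) = fst G - {v}" by simp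
  fix x y assume x: "x \<in> perpE G W" and y: "y \<subseteq> fst G - {v}"
  let ?A = "snd G"
  have sym: "\<And>u w. ?A u w = ?A w u" using graphD(2)[OF g] .
  have xV: "x \<subseteq> fst G" using x unfolding perpE_def by auto
  have fin: "finite x" "finite (x - {v})" "finite y"
    using xV y by (auto intro: graphD(5)[OF g])
  have "bform (snd (apply_rule (Gpr v) G)) (x - {v}) y
      = bform (\<lambda>u w. ?A u w \<noteq> (?A v u \<and> ?A v w)) (x - {v}) y"
    unfolding apply_rule.simps snd_conv by (rule bform_restrict) (use xV y in auto)
  also have "\<dots> = (bform ?A (x - {v}) y \<noteq> bform (\<lambda>u w. ?A v u \<and> ?A v w) (x - {v}) y)"
    by (rule bform_add[OF fin(2,3)])
  also have "bform (\<lambda>u w. ?A v u \<and> ?A v w) (x - {v}) y = (bform ?A (x - {v}) {v} \<and> bform ?A {v} y)"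
    by (rule bform_rank_one[where A = "snd G", OF sym fin(2,3)])
  finally have reduced: "bform (snd (apply_rule (Gpr v) G)) (x - {v}) y
      = (bform ?A (x - {v}) y \<noteq> (bform ?A (x - {v}) {v} \<and> bform ?A {v} y))" .
  have "\<not> bform ?A x {v}" using perpE_orth[OF x] v by simp
  then have "bform ?A (x - {v}) {v} = (v \<in> x)"
    using bform_remove[OF fin(1), of "{v}" ?A v] loop by (simp add: bform_single)
  then show "bform (snd (apply_rule (Gpr v) G)) (x - {v}) y = bform ?A x y"
    using reduced bform_remove[OF fin(1,3), of ?A v] by auto
qed

text \<open>gdr at an edge v1--v2 of loopless vertices: A' = A + Q1^T Q2 + Q2^T Q1, and x is
  orthogonal to both v1 and v2.\<close>

lemma gdr_compatible:
  assumes g: "is_graph G" and v: "v1 \<in> W" "v2 \<in> W" and app: "applies (Gdr v1 v2) G"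
  shows "perp_compatible G W {v1, v2} (apply_rule (Gdr v1 v2) G)"
  unfolding perp_compatible_def
proof (intro conjI ballI allI impI)
  show "fst (apply_rule (Gdr v1 v2) G) = fst G - {v1, v2}" by simp
  fix x y assume x: "x \<in> perpE G W" and y: "y \<subseteq> fst G - {v1, v2}"
  let ?A = "snd G" and ?a = "x - {v1, v2}"
  have sym: "\<And>u w. ?A u w = ?A w u" using graphD(2)[OF g] .
  have l1: "\<not> ?A v1 v1" and l2: "\<not> ?A v2 v2" and e12: "?A v1 v2" "?A v2 v1"
    using app sym by auto
  have xV: "x \<subseteq> fst G" using x unfolding perpE_def by auto
  have fin: "finite x" "finite (x - {v1})" "finite ?a" "finite y"
    using xV y by (auto intro: graphD(5)[OF g])
  have "bform (snd (apply_rule (Gdr v1 v2) G)) ?a y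
      = bform (\<lambda>u w. ?A u w \<noteq> ((?A v1 u \<and> ?A v2 w) \<noteq> (?A v2 u \<and> ?A v1 w))) ?a y"
    unfolding apply_rule.simps snd_conv by (rule bform_restrict) (use xV y in auto)
  also have "\<dots> = (bform ?A ?a y \<noteq>
      bform (\<lambda>u w. (?A v1 u \<and> ?A v2 w) \<noteq> (?A v2 u \<and> ?A v1 w)) ?a y)"
    by (rule bform_add[OF fin(3,4)])
  also have "bform (\<lambda>u w. (?A v1 u \<and> ?A v2 w) \<noteq> (?A v2 u \<and> ?A v1 w)) ?a y
      = (bform (\<lambda>u w. ?A v1 u \<and> ?A v2 w) ?a y \<noteq> bform (\<lambda>u w. ?A v2 u \<and> ?A v1 w) ?a y)"
    by (rule bform_add[OF fin(3,4)])
  also have "bform (\<lambda>u w. ?A v1 u \<and> ?A v2 w) ?a y = (bform ?A ?a {v1} \<and> bform ?A {v2} y)"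
    by (rule bform_rank_one[where A = "snd G", OF sym fin(3,4)])
  also have "bform (\<lambda>u w. ?A v2 u \<and> ?A v1 w) ?a y = (bform ?A ?a {v2} \<and> bform ?A {v1} y)"
    by (rule bform_rank_one[where A = "snd G", OF sym fin(3,4)])
  finally have reduced: "bform (snd (apply_rule (Gdr v1 v2) G)) ?a y = (bform ?A ?a y \<noteq>
      ((bform ?A ?a {v1} \<and> bform ?A {v2} y) \<noteq> (bform ?A ?a {v2} \<and> bform ?A {v1} y)))" .
  have remove_both: "bform ?A x z =
      ((bform ?A ?a z \<noteq> (v2 \<in> x \<and> bform ?A {v2} z)) \<noteq> (v1 \<in> x \<and> bform ?A {v1} z))"
    if "finite z" for z
  proof -
    have "?a = (x - {v1}) - {v2}" by auto
    then show ?thesis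
      using bform_remove[OF fin(1) that, of ?A v1] bform_remove[OF fin(2) that, of ?A v2]
        e12 l1 by auto
  qed
  have "\<not> bform ?A x {v1}" "\<not> bform ?A x {v2}" using perpE_orth[OF x] v by auto
  then have "bform ?A ?a {v1} = (v2 \<in> x)" "bform ?A ?a {v2} = (v1 \<in> x)"
    using remove_both[of "{v1}"] remove_both[of "{v2}"] l1 l2 e12
    by (auto simp: bform_single)
  then show "bform (snd (apply_rule (Gdr v1 v2) G)) ?a y = bform ?A x y"
    using reduced remove_both[OF fin(4)] by auto
qed

lemma gnr_compatible:
  assumes g: "is_graph G" and app: "applies (Gnr v) G"
  shows "perp_compatible G W {v} (apply_rule (Gnr v) G)"
  unfolding perp_compatible_def
proof (intro conjI ballI allI impI)
  show "fst (apply_rule (Gnr v) G) = fst G - {v}" by simp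
  fix x y assume x: "x \<in> perpE G W" and y: "y \<subseteq> fst G - {v}"
  have xV: "x \<subseteq> fst G" using x unfolding perpE_def by auto
  have fin: "finite x" "finite y" using xV y by (auto intro: graphD(5)[OF g])
  have no_row: "{w \<in> y. snd G v w} = {}" using app y by auto
  have "bform (snd (apply_rule (Gnr v) G)) (x - {v}) y = bform (snd G) (x - {v}) y"
    unfolding apply_rule.simps snd_conv by (rule bform_restrict) (use xV y in auto)
  moreover have "\<not> bform (snd G) {v} y" unfolding bform_single_left no_row by simp
  ultimately show "bform (snd (apply_rule (Gnr v) G)) (x - {v}) y = bform (snd G) x y"
    using bform_remove[OF fin, of "snd G" v] by simp
qed

text \<open>If W is loopless and has no inner edge, reducibility forces W to be isolated:
  E(u, v) = E(y, v) + E(z, v) = 0 for u = y + z with y in span W and z orthogonal.\<close>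

lemma reducible_independent_isolated:
  assumes g: "is_graph G" and WV: "W \<subseteq> fst G" and red: "reducible G W"
    and indep: "\<forall>v1\<in>W. \<forall>v2\<in>W. \<not> snd G v1 v2" and v: "v \<in> W" and u: "u \<in> fst G"
  shows "\<not> snd G v u"
proof -
  obtain z where z: "z \<in> perpE G W" "symdiff {u} z \<subseteq> W"
    using reducible_decomp[OF red, of "{u}"] u by auto
  have fin: "finite (symdiff {u} z)" "finite z"
    using z WV graphD(5)[OF g] unfolding perpE_def by auto
  have "{u} = symdiff (symdiff {u} z) z" unfolding symdiff_def by auto
  then have "bform (snd G) {u} {v} = (bform (snd G) (symdiff {u} z) {v} \<noteq> bform (snd G) z {v})"
    using bform_symdiff_left[OF fin, of "{v}" "snd G"] by simp
  moreover have no_edge: "{w \<in> symdiff {u} z. snd G w v} = {}" using z(2) indep v by auto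
  then have "\<not> bform (snd G) (symdiff {u} z) {v}" unfolding bform_single_right no_edge by simp
  moreover have "\<not> bform (snd G) z {v}" using perpE_orth[OF z(1), of "{v}"] v by simp
  ultimately have "\<not> snd G u v" unfolding bform_single by simp
  then show ?thesis using graphD(2)[OF g] by metis
qed

lemma exists_compatible_rule:
  assumes g: "is_graph G" and WV: "W \<subseteq> fst G" and red: "reducible G W" and ne: "W \<noteq> {}"
  obtains r where "applies r G" "rule_dom r \<subseteq> W" "rule_dom r \<noteq> {}"
    "perp_compatible G W (rule_dom r) (apply_rule r G)"
proof -
  let ?A = "snd G"
  consider (loop) v where "v \<in> W" "?A v v"
    | (edge) v1 v2 where "v1 \<in> W" "v2 \<in> W" "?A v1 v2" "\<forall>v\<in>W. \<not> ?A v v"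
    | (isolated) v where "v \<in> W" "\<forall>v1\<in>W. \<forall>v2\<in>W. \<not> ?A v1 v2"
    using ne by blast
  then show ?thesis
  proof cases
    case loop
    then show ?thesis using that[of "Gpr v"] gpr_compatible[OF g] WV by auto
  next
    case edge
    then have "applies (Gdr v1 v2) G" using WV by auto
    then show ?thesis using that[of "Gdr v1 v2"] gdr_compatible[OF g] edge by auto
  next
    case isolated
    then have "applies (Gnr v) G"
      using reducible_independent_isolated[OF g WV red] WV by auto
    then show ?thesis using that[of "Gnr v"] gnr_compatible[OF g] isolated by auto
  qed
qed

lemma Gamma_empty:
  assumes g: "is_graph G"
  shows "Gamma {} G = G"
proof -
  have "{u} \<in> perpE G {}" if "u \<in> fst G" for u
    using that unfolding perpE_def span_W_def bform_def by auto
  moreover have "reducible G {}"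
    unfolding reducible_def span_W_def perpE_def symdiff_def bform_def by auto
  ultimately have "bformW G {} {u} {w} = snd G u w" if "u \<in> fst G" "w \<in> fst G" for u w
    using gamma_edge[OF g, of "{}" u w "{u}"] that by (simp add: symdiff_def bform_single)
  then have edge: "snd G u w = (u \<in> fst G \<and> w \<in> fst G \<and> bformW G {} {u} {w})" for u w
    using graphD(3,4)[OF g] by blast
  show ?thesis unfolding Gamma_def by (rule prod_eqI) (auto simp: fun_eq_iff edge)
qed

lemma strategy_exists:
  assumes "finite W" "is_graph G" "W \<subseteq> fst G" "reducible G W"
  shows "\<exists>rs. applicable rs G \<and> strategy_dom rs = W \<and> run_strategy rs G = Gamma W G"
  using assms
proof (induction "card W" arbitrary: G W rule: less_induct)
  case less
  note fin = less.prems(1) and g = less.prems(2) and WV = less.prems(3) and red = less.prems(4)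
  show ?case
  proof (cases "W = {}")
    case True
    then show ?thesis using Gamma_empty[OF g] by (intro exI[of _ "[]"]) (simp add: strategy_dom_def)
  next
    case False
    then obtain r where r: "applies r G" "rule_dom r \<subseteq> W" "rule_dom r \<noteq> {}"
      and comp: "perp_compatible G W (rule_dom r) (apply_rule r G)"
      using exists_compatible_rule[OF g WV red] by blast
    let ?G' = "apply_rule r G" and ?D = "rule_dom r"
    have g': "is_graph ?G'" by (rule is_graph_apply_rule[OF g])
    note reduction = perp_compatible_reduction[OF g g' WV red r(2) comp]
    have "card (W - ?D) < card W"
      by (rule psubset_card_mono) (use fin r(2,3) in auto)
    moreover have "W - ?D \<subseteq> fst ?G'" using WV by (auto simp: fst_apply_rule)
    ultimately obtain rs where rs: "applicable rs ?G'" "strategy_dom rs = W - ?D"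
      "run_strategy rs ?G' = Gamma (W - ?D) ?G'"
      using less.hyps[OF _ _ g' _ reduction(1)] fin by blast
    have "strategy_dom (r # rs) = W" using rs(2) r(2) unfolding strategy_dom_def by auto
    then show ?thesis using rs r(1) reduction(2) by (intro exI[of _ "r # rs"]) simp
  qed
qed

theorem mainTheorem10:
  fixes G :: "'a graph" and W :: "'a set"
  assumes "is_graph G" and "W \<subseteq> fst G" and "reducible G W"
  shows "\<exists>rs. applicable rs G \<and> strategy_dom rs = W \<and> run_strategy rs G = Gamma W G"
proof -
  have "finite W" using assms(1,2) graphD(5) by blast
  then show ?thesis using strategy_exists assms by blast
qed

end
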